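(* Let $A$ be a unital $C^*$-algebra such that $C(\mathbb T,A)$ has the cancellation property. Then $A$ is $K_1$-injective.
   Context: A $C^*$-algebra $B$ has cancellation of projections if for all projections $p,q,r\in B$ with $p\perp r$, $q\perp r$ and $p+r\sim q+r$ (Murray–von Neumann), one has $p\sim q$; $B$ has the cancellation property if $M_n(B)$ has cancellation of projections for every $n\ge1$. A unital $C^*$-algebra $A$ is $K_1$-injective if the natural map $\mathcal U(A)/\mathcal U^0(A)\to K_1(A)$ is injective, where $\mathcal U^0(A)$ is the connected component of $1$ in the unitary group $\mathcal U(A)$. *)

theory Defs
  imports "HOL-Analysis.Analysis"
begin

text \<open>A unital C*-algebra: a unital Banach algebra (over the reals, from the library)
together with a compatible complex scalar multiplication and an involution
satisfying the C*-identity.\<close>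

class cstar_algebra = real_normed_algebra_1 + banach +
  fixes cstar :: "'a \<Rightarrow> 'a"
    and cscale :: "complex \<Rightarrow> 'a \<Rightarrow> 'a"
  assumes cscale_of_real: "cscale (of_real r) x = scaleR r x"
    and cscale_add_left: "cscale (a + b) x = cscale a x + cscale b x"
    and cscale_add_right: "cscale a (x + y) = cscale a x + cscale a y"
    and cscale_mult_scalar: "cscale (a * b) x = cscale a (cscale b x)"
    and cscale_mult_left: "cscale a (x * y) = cscale a x * y"
    and cscale_mult_right: "cscale a (x * y) = x * cscale a y"
    and norm_cscale: "norm (cscale a x) = norm a * norm x"
    and cstar_cstar: "cstar (cstar x) = x"
    and cstar_add: "cstar (x + y) = cstar x + cstar y"
    and cstar_mult: "cstar (x * y) = cstar y * cstar x"
    and cstar_cscale: "cstar (cscale a x) = cscale (cnj a) (cstar x)"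
    and cstar_identity: "norm (cstar x * x) = norm x ^ 2"

definition mat :: "nat \<Rightarrow> (nat \<Rightarrow> nat \<Rightarrow> 'a::cstar_algebra) set" where
  "mat n = {M. \<forall>i j. (n \<le> i \<or> n \<le> j) \<longrightarrow> M i j = 0}"

definition mmul :: "nat \<Rightarrow> (nat \<Rightarrow> nat \<Rightarrow> 'a::cstar_algebra) \<Rightarrow> (nat \<Rightarrow> nat \<Rightarrow> 'a) \<Rightarrow> nat \<Rightarrow> nat \<Rightarrow> 'a" where
  "mmul n M N = (\<lambda>i j. if i < n \<and> j < n then (\<Sum>k<n. M i k * N k j) else 0)"

definition madd :: "(nat \<Rightarrow> nat \<Rightarrow> 'a::cstar_algebra) \<Rightarrow> (nat \<Rightarrow> nat \<Rightarrow> 'a) \<Rightarrow> nat \<Rightarrow> nat \<Rightarrow> 'a" where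
  "madd M N = (\<lambda>i j. M i j + N i j)"

definition mstar :: "(nat \<Rightarrow> nat \<Rightarrow> 'a::cstar_algebra) \<Rightarrow> nat \<Rightarrow> nat \<Rightarrow> 'a" where
  "mstar M = (\<lambda>i j. cstar (M j i))"

definition mone :: "nat \<Rightarrow> nat \<Rightarrow> nat \<Rightarrow> 'a::cstar_algebra" where
  "mone n = (\<lambda>i j. if i < n \<and> i = j then 1 else 0)"

definition munitary :: "nat \<Rightarrow> (nat \<Rightarrow> nat \<Rightarrow> 'a::cstar_algebra) \<Rightarrow> bool" where
  "munitary n U \<longleftrightarrow> U \<in> mat n \<and> mmul n (mstar U) U = mone n \<and> mmul n U (mstar U) = mone n"

text \<open>Homotopy of unitaries in U(M_n(A)). The (C*-)norm topology on M_n(A) coincides with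
the entrywise topology, so continuity of a path is entrywise continuity.\<close>

definition munitary_homotopic :: "nat \<Rightarrow> (nat \<Rightarrow> nat \<Rightarrow> 'a::cstar_algebra) \<Rightarrow> (nat \<Rightarrow> nat \<Rightarrow> 'a) \<Rightarrow> bool" where
  "munitary_homotopic n U V \<longleftrightarrow>
     (\<exists>\<gamma> :: real \<Rightarrow> nat \<Rightarrow> nat \<Rightarrow> 'a.
        (\<forall>i j. continuous_on {0..1} (\<lambda>t. \<gamma> t i j)) \<and>
        (\<forall>t\<in>{0..1}. munitary n (\<gamma> t)) \<and> \<gamma> 0 = U \<and> \<gamma> 1 = V)"

definition stab :: "'a::cstar_algebra \<Rightarrow> nat \<Rightarrow> nat \<Rightarrow> nat \<Rightarrow> 'a" where
  "stab u k = (\<lambda>i j. if i = 0 \<and> j = 0 then u else mone (Suc k) i j)"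

definition unitary_el :: "'a::cstar_algebra \<Rightarrow> bool" where
  "unitary_el u \<longleftrightarrow> cstar u * u = 1 \<and> u * cstar u = 1"

text \<open>U^0(A): the connected component of 1 in U(A) (equal to the path component
of 1, as U(A) is locally path connected).\<close>

definition U0 :: "'a::cstar_algebra set" where
  "U0 = {u. unitary_el u \<and> (\<exists>\<gamma> :: real \<Rightarrow> 'a. continuous_on {0..1} \<gamma> \<and>
            (\<forall>t\<in>{0..1}. unitary_el (\<gamma> t)) \<and> \<gamma> 0 = 1 \<and> \<gamma> 1 = u)}"

text \<open>[u] = [v] in K_1(A) (K_1(A) = U_\<infinity>(A)/~, stable homotopy), and
injectivity of U(A)/U^0(A) \<rightarrow> K_1(A): equal K_1-classes imply equal cosets.\<close>

definition K1_injective :: "'a::cstar_algebra itself \<Rightarrow> bool" where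
  "K1_injective _ \<longleftrightarrow>
     (\<forall>u v :: 'a. unitary_el u \<and> unitary_el v \<and>
        (\<exists>k. munitary_homotopic (Suc k) (stab u k) (stab v k))
        \<longrightarrow> cstar v * u \<in> U0)"

text \<open>M_n(C(T,A)) is identified (canonically) with C(T, M_n(A)): functions
on the complex plane, continuous on the unit circle T, with values in M_n(A),
normalised to be 0 off T. Operations are pointwise.\<close>

definition ctmat :: "nat \<Rightarrow> (complex \<Rightarrow> nat \<Rightarrow> nat \<Rightarrow> 'a::cstar_algebra) set" where
  "ctmat n = {F. (\<forall>i j. continuous_on (sphere 0 1) (\<lambda>z. F z i j)) \<and>
                 (\<forall>z. z \<notin> sphere 0 1 \<longrightarrow> F z = (\<lambda>i j. 0)) \<and>
                 (\<forall>z. F z \<in> mat n)}"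

definition ctmul :: "nat \<Rightarrow> (complex \<Rightarrow> nat \<Rightarrow> nat \<Rightarrow> 'a::cstar_algebra) \<Rightarrow> (complex \<Rightarrow> nat \<Rightarrow> nat \<Rightarrow> 'a) \<Rightarrow> complex \<Rightarrow> nat \<Rightarrow> nat \<Rightarrow> 'a" where
  "ctmul n F G = (\<lambda>z. mmul n (F z) (G z))"

definition ctadd :: "(complex \<Rightarrow> nat \<Rightarrow> nat \<Rightarrow> 'a::cstar_algebra) \<Rightarrow> (complex \<Rightarrow> nat \<Rightarrow> nat \<Rightarrow> 'a) \<Rightarrow> complex \<Rightarrow> nat \<Rightarrow> nat \<Rightarrow> 'a" where
  "ctadd F G = (\<lambda>z. madd (F z) (G z))"

definition ctstar :: "(complex \<Rightarrow> nat \<Rightarrow> nat \<Rightarrow> 'a::cstar_algebra) \<Rightarrow> complex \<Rightarrow> nat \<Rightarrow> nat \<Rightarrow> 'a" where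
  "ctstar F = (\<lambda>z. mstar (F z))"

definition ctzero :: "complex \<Rightarrow> nat \<Rightarrow> nat \<Rightarrow> 'a::cstar_algebra" where
  "ctzero = (\<lambda>z i j. 0)"

definition ctprojection :: "nat \<Rightarrow> (complex \<Rightarrow> nat \<Rightarrow> nat \<Rightarrow> 'a::cstar_algebra) \<Rightarrow> bool" where
  "ctprojection n P \<longleftrightarrow> P \<in> ctmat n \<and> ctstar P = P \<and> ctmul n P P = P"

definition ctmvn :: "nat \<Rightarrow> (complex \<Rightarrow> nat \<Rightarrow> nat \<Rightarrow> 'a::cstar_algebra) \<Rightarrow> (complex \<Rightarrow> nat \<Rightarrow> nat \<Rightarrow> 'a) \<Rightarrow> bool" where
  "ctmvn n P Q \<longleftrightarrow> (\<exists>V \<in> ctmat n. ctmul n (ctstar V) V = P \<and> ctmul n V (ctstar V) = Q)"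

definition ct_cancellation_n :: "'a::cstar_algebra itself \<Rightarrow> nat \<Rightarrow> bool" where
  "ct_cancellation_n _ n \<longleftrightarrow>
     (\<forall>P Q R :: complex \<Rightarrow> nat \<Rightarrow> nat \<Rightarrow> 'a.
        ctprojection n P \<and> ctprojection n Q \<and> ctprojection n R \<and>
        ctmul n P R = ctzero \<and> ctmul n Q R = ctzero \<and>
        ctmvn n (ctadd P R) (ctadd Q R) \<longrightarrow> ctmvn n P Q)"

definition CT_cancellation_property :: "'a::cstar_algebra itself \<Rightarrow> bool" where
  "CT_cancellation_property T \<longleftrightarrow> (\<forall>n\<ge>1. ct_cancellation_n T n)"

end

theory Submission
  imports Defs
begin

(*
  Let u, v be unitaries of A and let \<gamma> be a path of unitaries in M_{k+1}(A) from
  u \<oplus> 1_k to v \<oplus> 1_k.  The projections p(t) = \<gamma>(t) e_00 \<gamma>(t)* onto the first column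
  of \<gamma>(t) form a loop (p(0) = p(1) = e_00), i.e. a projection P in M_{2k+1}(C(T,A)).
  With the constant projections E = e_00 and R = 0_{k+1} \<oplus> 1_k one checks that
  P + R ~ E + R, the equivalence being given by an explicit partial isometry built
  from the columns of \<gamma>(t).  Cancellation yields a loop of partial isometries B(t)
  with B(t)* B(t) = p(t) and B(t) B(t)* = e_00.  Then a(t) = (B(t) \<gamma>(t))_00 is a
  continuous path of unitaries in A with a(0) = c u and a(1) = c v for a single
  isometry c = B(0)_00, so t \<mapsto> a(t)* a(0) connects 1 to v* u inside U(A).
*)

section \<open>The involution\<close>

lemma cstar_zero [simp]: "cstar (0::'a::cstar_algebra) = 0"
  using cstar_add[of "0::'a" 0] by simp

lemma cstar_one [simp]: "cstar (1::'a::cstar_algebra) = 1"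
proof -
  have "cstar (cstar 1 * (1::'a)) = cstar 1 * cstar (cstar 1)" by (rule cstar_mult)
  then have "cstar (cstar (1::'a)) = cstar 1 * 1" by (simp add: cstar_cstar)
  then show ?thesis by (simp add: cstar_cstar)
qed

lemma cstar_sum: "cstar (sum f A) = (\<Sum>i\<in>A. cstar (f i :: 'a::cstar_algebra))"
  by (induction A rule: infinite_finite_induct) (auto simp: cstar_add)

text \<open>The involution is isometric (we only need the inequality); together with
  real linearity this makes it continuous, which is needed for continuity of
  the paths built below.\<close>

lemma norm_cstar_le: "norm (cstar x) \<le> norm (x::'a::cstar_algebra)"
proof (cases "cstar x = 0")
  case False
  have "norm (cstar x) ^ 2 = norm (cstar (cstar x) * cstar x)" by (rule cstar_identity[symmetric])
  also have "\<dots> = norm (x * cstar x)" by (simp add: cstar_cstar)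
  also have "\<dots> \<le> norm x * norm (cstar x)" by (rule norm_mult_ineq)
  finally have "norm (cstar x) * norm (cstar x) \<le> norm x * norm (cstar x)"
    by (simp add: power2_eq_square)
  then show ?thesis using False by simp
qed simp

lemma bounded_linear_cstar: "bounded_linear (cstar :: 'a::cstar_algebra \<Rightarrow> 'a)"
proof (rule bounded_linear_intro[where K=1])
  show "cstar (scaleR r x) = scaleR r (cstar x)" for r and x :: 'a
    using cstar_cscale[of "of_real r" x] by (simp add: cscale_of_real)
qed (auto simp: cstar_add norm_cstar_le)

lemma continuous_on_cstar [continuous_intros]:
  "continuous_on S f \<Longrightarrow> continuous_on S (\<lambda>t. cstar (f t :: 'a::cstar_algebra))"
  using bounded_linear.continuous_on[OF bounded_linear_cstar] by blast

lemma unitary_cstar_mult: "unitary_el x \<Longrightarrow> unitary_el y \<Longrightarrow> unitary_el (cstar x * y)"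
  unfolding unitary_el_def
  by (simp add: cstar_mult cstar_cstar mult.assoc) (metis mult.assoc mult_1_left mult_1_right)

text \<open>A continuous path of unitaries a yields the element a(1)* a(0) of U^0(A):
  the path t \<mapsto> a(t)* a(0) joins 1 to it.\<close>

lemma unitary_path_in_U0:
  fixes a :: "real \<Rightarrow> 'a::cstar_algebra"
  assumes cont: "continuous_on {0..1} a" and unit: "\<And>t. t \<in> {0..1} \<Longrightarrow> unitary_el (a t)"
  shows "cstar (a 1) * a 0 \<in> U0"
  unfolding U0_def
proof (intro CollectI conjI exI[of _ "\<lambda>t. cstar (a t) * a 0"] ballI)
  have ends: "unitary_el (a 0)" "unitary_el (a 1)" using unit by auto
  show "unitary_el (cstar (a 1) * a 0)" using ends by (simp add: unitary_cstar_mult)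
  show "continuous_on {0..1} (\<lambda>t. cstar (a t) * a 0)" by (intro continuous_intros cont)
  show "unitary_el (cstar (a t) * a 0)" if "t \<in> {0..1}" for t
    using unit that by (auto intro!: unitary_cstar_mult)
  show "cstar (a 0) * a 0 = 1" using unit[of 0] by (simp add: unitary_el_def)
qed simp

lemma mmul_assoc: "mmul n (mmul n M N) L = mmul n M (mmul n N L)"
proof (intro ext)
  fix i j
  show "mmul n (mmul n M N) L i j = mmul n M (mmul n N L) i j"
  proof (cases "i < n \<and> j < n")
    case True
    have "mmul n (mmul n M N) L i j = (\<Sum>q<n. \<Sum>k<n. M i k * N k q * L q j)"
      using True by (simp add: mmul_def sum_distrib_right)
    also have "\<dots> = (\<Sum>k<n. \<Sum>q<n. M i k * (N k q * L q j))"
      by (subst sum.swap) (simp add: mult.assoc)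
    also have "\<dots> = mmul n M (mmul n N L) i j"
      using True by (simp add: mmul_def sum_distrib_left)
    finally show ?thesis .
  qed (auto simp: mmul_def)
qed

definition orthonormal_columns :: "nat \<Rightarrow> (nat \<Rightarrow> nat \<Rightarrow> 'a::cstar_algebra) \<Rightarrow> bool" where
  "orthonormal_columns n W \<longleftrightarrow>
     (\<forall>a<n. \<forall>b<n. (\<Sum>r<n. cstar (W r a) * W r b) = (if a = b then 1 else 0))"

definition orthonormal_rows :: "nat \<Rightarrow> (nat \<Rightarrow> nat \<Rightarrow> 'a::cstar_algebra) \<Rightarrow> bool" where
  "orthonormal_rows n W \<longleftrightarrow>
     (\<forall>r<n. \<forall>s<n. (\<Sum>c<n. W r c * cstar (W s c)) = (if r = s then 1 else 0))"

lemma munitary_orthonormal: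
  assumes "munitary n W"
  shows "orthonormal_columns n W" "orthonormal_rows n W"
proof -
  have cols: "mmul n (mstar W) W a b = mone n a b" and rows: "mmul n W (mstar W) a b = mone n a b"
    for a b using assms by (auto simp: munitary_def)
  show "orthonormal_columns n W" unfolding orthonormal_columns_def
  proof (intro allI impI)
    fix a b assume "a < n" "b < n"
    then show "(\<Sum>r<n. cstar (W r a) * W r b) = (if a = b then 1 else 0)"
      using cols[of a b] by (simp add: mmul_def mstar_def mone_def)
  qed
  show "orthonormal_rows n W" unfolding orthonormal_rows_def
  proof (intro allI impI)
    fix r s assume "r < n" "s < n"
    then show "(\<Sum>c<n. W r c * cstar (W s c)) = (if r = s then 1 else 0)"
      using rows[of r s] by (simp add: mmul_def mstar_def mone_def)
  qed
qed

definition diag_proj :: "(nat \<Rightarrow> bool) \<Rightarrow> nat \<Rightarrow> nat \<Rightarrow> 'a::cstar_algebra" where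
  "diag_proj S = (\<lambda>i j. if i = j \<and> S i then 1 else 0)"

lemma mmul_diag_proj_right:
  "mmul n M (diag_proj S) i j = (if i < n \<and> j < n \<and> S j then M i j else 0)"
proof (cases "i < n \<and> j < n")
  case True
  have "mmul n M (diag_proj S) i j = (\<Sum>l<n. M i l * diag_proj S l j)" using True by (simp add: mmul_def)
  also have "\<dots> = (\<Sum>l<n. if l = j then (if S j then M i j else 0) else 0)"
    by (rule sum.cong) (auto simp: diag_proj_def)
  finally show ?thesis using True by simp
qed (auto simp: mmul_def)

lemma mstar_diag_proj: "mstar (diag_proj S) = (diag_proj S :: nat \<Rightarrow> nat \<Rightarrow> 'a::cstar_algebra)"
  by (intro ext) (auto simp: mstar_def diag_proj_def)

lemma mmul_diag_proj: "mmul n (diag_proj S) (diag_proj T) = diag_proj (\<lambda>i. i < n \<and> S i \<and> T i)"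
  by (intro ext) (simp add: mmul_diag_proj_right, auto simp: diag_proj_def)

lemma sum_lessThan_add: "(\<Sum>j<(m::nat) + k. f j) = (\<Sum>j<m. f j) + (\<Sum>c<k. f (m + c))"
  by (induction k) (simp_all add: add.assoc)

lemma sum_truncate:
  assumes "m \<le> (n::nat)" "\<And>l. l < m \<Longrightarrow> f l = g l" "\<And>l. m \<le> l \<Longrightarrow> l < n \<Longrightarrow> f l = 0"
  shows "sum f {..<n} = sum g {..<m}"
proof -
  have "sum f {..<n} = sum f {..<m}"
    by (rule sum.mono_neutral_right) (use assms not_less in auto)
  also have "\<dots> = sum g {..<m}" using assms(2) by simp
  finally show ?thesis .
qed

lemma sum_sandwich: "(\<Sum>r\<in>A. a * f r * b) = a * sum f A * (b::'a::ring)"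
  by (simp add: sum_distrib_left sum_distrib_right)

section \<open>Loops and the circle\<close>

lemma loop_on_circle:
  fixes g :: "real \<Rightarrow> 'b::real_normed_vector"
  assumes "continuous_on {0..1} g" "g 0 = g 1"
  shows "continuous_on (sphere 0 1) (\<lambda>z. g (Arg2pi z / (2*pi)))"
proof -
  have "homotopic_loops UNIV g g"
    using assms by (simp add: homotopic_loops_refl path_def pathfinish_def pathstart_def)
  from homotopic_loops_imp_homotopic_circlemaps[OF this]
  show ?thesis using homotopic_with_imp_continuous by (auto simp: o_def)
qed

lemma Arg2pi_circle_param:
  assumes "0 \<le> t" "t \<le> (1::real)"
  shows "Arg2pi (exp (2 * of_real pi * of_real t * \<i>)) / (2*pi) = (if t = 1 then 0 else t)"
proof (cases "t = 1")
  case True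
  have "exp (2 * of_real pi * \<i>) = (1::complex)"
    by (metis exp_two_pi_i mult.commute)
  then show ?thesis using True by (simp add: Arg2pi_eq_0)
next
  case False
  have "Arg2pi (exp (2 * of_real pi * of_real t * \<i>)) = 2 * pi * t"
    by (subst Arg2pi_exp) (use assms False in auto)
  then show ?thesis using False by simp
qed

definition on_circle :: "(complex \<Rightarrow> nat \<Rightarrow> nat \<Rightarrow> 'a::cstar_algebra) \<Rightarrow> complex \<Rightarrow> nat \<Rightarrow> nat \<Rightarrow> 'a" where
  "on_circle F = (\<lambda>z. if z \<in> sphere 0 1 then F z else (\<lambda>i j. 0))"

lemma ctmul_on_circle: "ctmul n (on_circle F) (on_circle G) = on_circle (\<lambda>z. mmul n (F z) (G z))"
  by (intro ext) (auto simp: ctmul_def on_circle_def mmul_def)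

lemma ctstar_on_circle: "ctstar (on_circle F) = on_circle (\<lambda>z. mstar (F z))"
  by (intro ext) (auto simp: ctstar_def on_circle_def mstar_def)

lemma ctadd_on_circle: "ctadd (on_circle F) (on_circle G) = on_circle (\<lambda>z. madd (F z) (G z))"
  by (intro ext) (auto simp: ctadd_def on_circle_def madd_def)

lemma on_circle_zero: "on_circle (\<lambda>z i j. 0) = ctzero"
  by (intro ext) (auto simp: on_circle_def ctzero_def)

lemma on_circle_ctmat:
  assumes "\<And>i j. continuous_on (sphere 0 1) (\<lambda>z. F z i j)" "\<And>z. F z \<in> mat n"
  shows "on_circle F \<in> ctmat n"
  unfolding ctmat_def
proof (intro CollectI conjI allI impI)
  show "continuous_on (sphere 0 1) (\<lambda>z. on_circle F z i j)" for i j
    using assms(1)[of i j] by (rule continuous_on_eq) (auto simp: on_circle_def)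
  show "on_circle F z \<in> mat n" for z
    using assms(2)[of z] by (auto simp: on_circle_def mat_def)
qed (simp add: on_circle_def)

section \<open>The projections and the partial isometry of the construction\<close>

text \<open>Throughout, W is a unitary of M_{k+1}(A) and all matrices live in
  M_{2k+1}(A). The projection W e_00 W* onto the first column of W:\<close>

definition col_proj :: "nat \<Rightarrow> (nat \<Rightarrow> nat \<Rightarrow> 'a::cstar_algebra) \<Rightarrow> nat \<Rightarrow> nat \<Rightarrow> 'a" where
  "col_proj k W = (\<lambda>i j. if i < Suc k \<and> j < Suc k then W i 0 * cstar (W j 0) else 0)"

definition corner_proj :: "nat \<Rightarrow> nat \<Rightarrow> 'a::cstar_algebra" where
  "corner_proj = diag_proj (\<lambda>i. i = 0)"

definition tail_proj :: "nat \<Rightarrow> nat \<Rightarrow> nat \<Rightarrow> 'a::cstar_algebra" where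
  "tail_proj k = diag_proj (\<lambda>i. Suc k \<le> i \<and> i < Suc k + k)"

text \<open>The partial isometry V = intertwiner k W with V* V = col_proj + tail_proj and
  V V* = corner_proj + tail_proj.  Writing w_1, ..., w_k for the columns 1..k of W,
  isometry_row k W r is row r of the (k+1) x (2k+1) block matrix
  [W e_00 W* | w_1 ... w_k]; V places these rows at the positions
  row_slot k r = 0, k+1, ..., 2k (r = 0, ..., k) and is zero elsewhere.\<close>

definition row_slot :: "nat \<Rightarrow> nat \<Rightarrow> nat" where
  "row_slot k r = (if r = 0 then 0 else r + k)"

definition isometry_row :: "nat \<Rightarrow> (nat \<Rightarrow> nat \<Rightarrow> 'a::cstar_algebra) \<Rightarrow> nat \<Rightarrow> nat \<Rightarrow> 'a" where
  "isometry_row k W r j = (if j < Suc k then W r 0 * cstar (W j 0) else W r (j - k))"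

definition intertwiner :: "nat \<Rightarrow> (nat \<Rightarrow> nat \<Rightarrow> 'a::cstar_algebra) \<Rightarrow> nat \<Rightarrow> nat \<Rightarrow> 'a" where
  "intertwiner k W = (\<lambda>i j. if j < Suc k + k \<and> (i = 0 \<or> (Suc k \<le> i \<and> i < Suc k + k))
                           then isometry_row k W (if i = 0 then 0 else i - k) j else 0)"

lemma intertwiner_row_slot:
  "r < Suc k \<Longrightarrow> intertwiner k W (row_slot k r) j = (if j < Suc k + k then isometry_row k W r j else 0)"
  by (auto simp: intertwiner_def row_slot_def)

lemma intertwiner_gap: "i \<noteq> 0 \<Longrightarrow> i < Suc k \<Longrightarrow> intertwiner k W i j = 0"
  by (auto simp: intertwiner_def)

lemma row_slot_cases:
  assumes "i < Suc k + k" "\<not> (i \<noteq> 0 \<and> i < Suc k)"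
  shows "\<exists>r<Suc k. i = row_slot k r"
proof (cases "i = 0")
  case True
  then show ?thesis by (intro exI[of _ 0]) (simp add: row_slot_def)
next
  case False
  with assms show ?thesis by (intro exI[of _ "i - k"]) (auto simp: row_slot_def)
qed

lemma sum_row_slots:
  assumes "\<And>i. i \<noteq> 0 \<Longrightarrow> i < Suc k \<Longrightarrow> f i = 0"
  shows "(\<Sum>i<Suc k + k. f i) = (\<Sum>r<Suc k. f (row_slot k r))"
proof -
  have inj: "inj_on (row_slot k) {..<Suc k}" by (auto simp: row_slot_def inj_on_def split: if_splits)
  have "(\<Sum>i<Suc k + k. f i) = (\<Sum>i\<in>row_slot k ` {..<Suc k}. f i)"
  proof (rule sum.mono_neutral_right)
    show "\<forall>i\<in>{..<Suc k + k} - row_slot k ` {..<Suc k}. f i = 0"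
      using row_slot_cases assms by blast
  qed (auto simp: row_slot_def)
  also have "\<dots> = (\<Sum>r<Suc k. f (row_slot k r))" by (rule sum.reindex[OF inj, unfolded o_def])
  finally show ?thesis .
qed

lemma col_proj_mat: "col_proj k W \<in> mat (Suc k + k)"
  by (auto simp: mat_def col_proj_def)

lemma corner_proj_mat: "(corner_proj :: nat \<Rightarrow> nat \<Rightarrow> 'a::cstar_algebra) \<in> mat (Suc k + k)"
  by (auto simp: mat_def corner_proj_def diag_proj_def)

lemma tail_proj_mat: "(tail_proj k :: nat \<Rightarrow> nat \<Rightarrow> 'a::cstar_algebra) \<in> mat (Suc k + k)"
  by (auto simp: mat_def tail_proj_def diag_proj_def)

lemma intertwiner_mat: "intertwiner k W \<in> mat (Suc k + k)"
  by (auto simp: mat_def intertwiner_def)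

lemma col_proj_star: "mstar (col_proj k W) = col_proj k W"
  by (intro ext) (auto simp: mstar_def col_proj_def cstar_mult cstar_cstar)

lemma corner_proj_star: "mstar corner_proj = (corner_proj :: nat \<Rightarrow> nat \<Rightarrow> 'a::cstar_algebra)"
  by (simp add: corner_proj_def mstar_diag_proj)

lemma tail_proj_star: "mstar (tail_proj k) = (tail_proj k :: nat \<Rightarrow> nat \<Rightarrow> 'a::cstar_algebra)"
  by (simp add: tail_proj_def mstar_diag_proj)

lemma col_proj_idem:
  assumes col: "orthonormal_columns (Suc k) W"
  shows "mmul (Suc k + k) (col_proj k W) (col_proj k W) = col_proj k W"
proof (intro ext)
  fix i j
  show "mmul (Suc k + k) (col_proj k W) (col_proj k W) i j = col_proj k W i j"
  proof (cases "i < Suc k \<and> j < Suc k")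
    case True
    have "mmul (Suc k + k) (col_proj k W) (col_proj k W) i j
          = (\<Sum>l<Suc k + k. col_proj k W i l * col_proj k W l j)"
      using True by (simp add: mmul_def)
    also have "\<dots> = (\<Sum>l<Suc k. W i 0 * cstar (W l 0) * W l 0 * cstar (W j 0))"
      by (rule sum_truncate) (auto simp: col_proj_def True mult.assoc)
    also have "\<dots> = W i 0 * (\<Sum>l<Suc k. cstar (W l 0) * W l 0) * cstar (W j 0)"
      unfolding sum_sandwich[symmetric] by (simp add: mult.assoc)
    also have "\<dots> = col_proj k W i j"
      using col True by (simp add: orthonormal_columns_def col_proj_def)
    finally show ?thesis .
  qed (auto simp: mmul_def col_proj_def)
qed

lemma corner_proj_idem: "mmul (Suc k + k) corner_proj corner_proj = (corner_proj :: nat \<Rightarrow> nat \<Rightarrow> 'a::cstar_algebra)"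
  by (simp add: corner_proj_def mmul_diag_proj) (metis zero_less_Suc trans_less_add1)

lemma tail_proj_idem: "mmul (Suc k + k) (tail_proj k) (tail_proj k) = (tail_proj k :: nat \<Rightarrow> nat \<Rightarrow> 'a::cstar_algebra)"
  by (simp add: tail_proj_def mmul_diag_proj) (metis (no_types, lifting))

lemma corner_tail_orth: "mmul (Suc k + k) corner_proj (tail_proj k) = (\<lambda>i j. 0 :: 'a::cstar_algebra)"
  by (intro ext) (simp add: mmul_diag_proj_right tail_proj_def, auto simp: corner_proj_def diag_proj_def)

lemma col_tail_orth: "mmul (Suc k + k) (col_proj k W) (tail_proj k) = (\<lambda>i j. 0)"
  by (intro ext) (simp add: mmul_diag_proj_right tail_proj_def, auto simp: col_proj_def)

lemma isometry_row_columns: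
  assumes col: "orthonormal_columns (Suc k) W" and j: "j < Suc k + k" and l: "l < Suc k + k"
  shows "(\<Sum>r<Suc k. cstar (isometry_row k W r j) * isometry_row k W r l)
         = madd (col_proj k W) (tail_proj k) j l"
proof -
  have C: "\<And>a b. a < Suc k \<Longrightarrow> b < Suc k \<Longrightarrow> (\<Sum>r<Suc k. cstar (W r a) * W r b) = (if a = b then 1 else 0)"
    using col by (simp add: orthonormal_columns_def)
  have sums: "madd (col_proj k W) (tail_proj k) j l =
      (if j < Suc k \<and> l < Suc k then W j 0 * cstar (W l 0)
       else if \<not> j < Suc k \<and> \<not> l < Suc k \<and> j = l then 1 else 0)"
    using j l by (auto simp: madd_def col_proj_def tail_proj_def diag_proj_def)
  consider "j < Suc k" "l < Suc k" | "j < Suc k" "\<not> l < Suc k" | "\<not> j < Suc k" "l < Suc k"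
    | "\<not> j < Suc k" "\<not> l < Suc k" by blast
  then show ?thesis
  proof cases
    case 1
    have "(\<Sum>r<Suc k. cstar (isometry_row k W r j) * isometry_row k W r l)
          = (\<Sum>r<Suc k. W j 0 * (cstar (W r 0) * W r 0) * cstar (W l 0))"
      using 1 by (intro sum.cong) (auto simp: isometry_row_def cstar_mult cstar_cstar mult.assoc)
    also have "\<dots> = W j 0 * (\<Sum>r<Suc k. cstar (W r 0) * W r 0) * cstar (W l 0)"
      by (rule sum_sandwich)
    finally have "(\<Sum>r<Suc k. cstar (isometry_row k W r j) * isometry_row k W r l)
          = W j 0 * (\<Sum>r<Suc k. cstar (W r 0) * W r 0) * cstar (W l 0)" .
    then show ?thesis using 1 C[of 0 0] sums by simp
  next
    case 2
    have "(\<Sum>r<Suc k. cstar (isometry_row k W r j) * isometry_row k W r l)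
          = W j 0 * (\<Sum>r<Suc k. cstar (W r 0) * W r (l - k))"
      using 2 by (simp add: isometry_row_def cstar_mult cstar_cstar mult.assoc sum_distrib_left
                         del: sum.lessThan_Suc)
    then show ?thesis using 2 l C[of 0 "l - k"] sums by simp
  next
    case 3
    have "(\<Sum>r<Suc k. cstar (isometry_row k W r j) * isometry_row k W r l)
          = (\<Sum>r<Suc k. cstar (W r (j - k)) * W r 0) * cstar (W l 0)"
      using 3 by (simp add: isometry_row_def mult.assoc sum_distrib_right del: sum.lessThan_Suc)
    then show ?thesis using 3 j C[of "j - k" 0] sums by simp
  next
    case 4
    have "(\<Sum>r<Suc k. cstar (isometry_row k W r j) * isometry_row k W r l)
          = (\<Sum>r<Suc k. cstar (W r (j - k)) * W r (l - k))"
      using 4 by (simp add: isometry_row_def)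
    then show ?thesis using 4 j l C[of "j - k" "l - k"] sums by auto
  qed
qed

lemma isometry_row_rows:
  assumes col: "orthonormal_columns (Suc k) W" and row: "orthonormal_rows (Suc k) W"
    and r: "r < Suc k" and s: "s < Suc k"
  shows "(\<Sum>j<Suc k + k. isometry_row k W r j * cstar (isometry_row k W s j)) = (if r = s then 1 else 0)"
proof -
  have "(\<Sum>j<Suc k. isometry_row k W r j * cstar (isometry_row k W s j))
        = (\<Sum>j<Suc k. W r 0 * (cstar (W j 0) * W j 0) * cstar (W s 0))"
    by (intro sum.cong) (auto simp: isometry_row_def cstar_mult cstar_cstar mult.assoc)
  also have "\<dots> = W r 0 * (\<Sum>j<Suc k. cstar (W j 0) * W j 0) * cstar (W s 0)"
    by (rule sum_sandwich)
  also have "\<dots> = W r 0 * cstar (W s 0)" using col by (simp add: orthonormal_columns_def)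
  finally have head: "(\<Sum>j<Suc k. isometry_row k W r j * cstar (isometry_row k W s j))
                      = W r 0 * cstar (W s 0)" .
  have tail: "(\<Sum>c<k. isometry_row k W r (Suc k + c) * cstar (isometry_row k W s (Suc k + c)))
              = (\<Sum>c<k. W r (Suc c) * cstar (W s (Suc c)))"
    by (simp add: isometry_row_def)
  have "(\<Sum>j<Suc k + k. isometry_row k W r j * cstar (isometry_row k W s j))
        = (\<Sum>c<Suc k. W r c * cstar (W s c))"
    unfolding sum_lessThan_add head tail by (rule sum.lessThan_Suc_shift[symmetric])
  also have "\<dots> = (if r = s then 1 else 0)" using row r s by (simp add: orthonormal_rows_def)
  finally show ?thesis .
qed

lemma intertwiner_source:
  assumes col: "orthonormal_columns (Suc k) W"
  shows "mmul (Suc k + k) (mstar (intertwiner k W)) (intertwiner k W) = madd (col_proj k W) (tail_proj k)"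
proof (intro ext)
  fix j l
  show "mmul (Suc k + k) (mstar (intertwiner k W)) (intertwiner k W) j l = madd (col_proj k W) (tail_proj k) j l"
  proof (cases "j < Suc k + k \<and> l < Suc k + k")
    case True
    have "mmul (Suc k + k) (mstar (intertwiner k W)) (intertwiner k W) j l
          = (\<Sum>i<Suc k + k. cstar (intertwiner k W i j) * intertwiner k W i l)"
      using True by (simp add: mmul_def mstar_def)
    also have "\<dots> = (\<Sum>r<Suc k. cstar (intertwiner k W (row_slot k r) j) * intertwiner k W (row_slot k r) l)"
      by (rule sum_row_slots) (simp add: intertwiner_gap)
    also have "\<dots> = (\<Sum>r<Suc k. cstar (isometry_row k W r j) * isometry_row k W r l)"
      using True by (intro sum.cong) (auto simp: intertwiner_row_slot)
    also have "\<dots> = madd (col_proj k W) (tail_proj k) j l" using isometry_row_columns[OF col] True by blast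
    finally show ?thesis .
  qed (auto simp: mmul_def madd_def col_proj_def tail_proj_def diag_proj_def)
qed

lemma intertwiner_range:
  assumes col: "orthonormal_columns (Suc k) W" and row: "orthonormal_rows (Suc k) W"
  shows "mmul (Suc k + k) (intertwiner k W) (mstar (intertwiner k W)) = madd corner_proj (tail_proj k)"
proof (intro ext)
  fix i l
  show "mmul (Suc k + k) (intertwiner k W) (mstar (intertwiner k W)) i l = madd corner_proj (tail_proj k) i l"
  proof (cases "i < Suc k + k \<and> l < Suc k + k")
    case bounds: True
    have eq: "mmul (Suc k + k) (intertwiner k W) (mstar (intertwiner k W)) i l
              = (\<Sum>j<Suc k + k. intertwiner k W i j * cstar (intertwiner k W l j))"
      using bounds by (simp add: mmul_def mstar_def)
    show ?thesis
    proof (cases "(i \<noteq> 0 \<and> i < Suc k) \<or> (l \<noteq> 0 \<and> l < Suc k)")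
      case True
      then show ?thesis
        unfolding eq by (auto simp: intertwiner_gap madd_def corner_proj_def tail_proj_def diag_proj_def)
    next
      case False
      obtain r where r: "r < Suc k" "i = row_slot k r" using row_slot_cases False bounds by blast
      obtain s where s: "s < Suc k" "l = row_slot k s" using row_slot_cases False bounds by blast
      have "(\<Sum>j<Suc k + k. intertwiner k W i j * cstar (intertwiner k W l j))
            = (\<Sum>j<Suc k + k. isometry_row k W r j * cstar (isometry_row k W s j))"
        using r s by (intro sum.cong) (auto simp: intertwiner_row_slot)
      also have "\<dots> = (if r = s then 1 else 0)" by (rule isometry_row_rows[OF col row r(1) s(1)])
      also have "\<dots> = madd corner_proj (tail_proj k) i l"
        using r s by (auto simp: madd_def corner_proj_def tail_proj_def diag_proj_def row_slot_def)
      finally show ?thesis using eq by simp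
    qed
  qed (auto simp: mmul_def madd_def corner_proj_def tail_proj_def diag_proj_def)
qed

lemma stab_col0: "stab u k j 0 = (if j = 0 then u else 0)"
  by (simp add: stab_def mone_def)

lemma col_proj_stab: "unitary_el u \<Longrightarrow> col_proj k (stab u k) = corner_proj"
  by (intro ext) (auto simp: col_proj_def corner_proj_def diag_proj_def stab_col0 unitary_el_def)

lemma intertwiner_stab: "unitary_el u \<Longrightarrow> intertwiner k (stab u k) = intertwiner k (mone (Suc k))"
  unfolding intertwiner_def isometry_row_def
  by (intro ext) (auto simp: stab_col0 unitary_el_def stab_def mone_def)

lemma continuous_on_if_const:
  "(c \<Longrightarrow> continuous_on S f) \<Longrightarrow> (\<not> c \<Longrightarrow> continuous_on S g) \<Longrightarrow> continuous_on S (\<lambda>t. if c then f t else g t)"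
  by (cases c) auto

lemma continuous_on_col_proj:
  "(\<And>i j. continuous_on S (\<lambda>t. G t i j)) \<Longrightarrow> continuous_on S (\<lambda>t. col_proj k (G t) i j)"
  unfolding col_proj_def by (intro continuous_on_if_const continuous_intros)

lemma continuous_on_intertwiner:
  "(\<And>i j. continuous_on S (\<lambda>t. G t i j)) \<Longrightarrow> continuous_on S (\<lambda>t. intertwiner k (G t) i j)"
  unfolding intertwiner_def isometry_row_def by (intro continuous_on_if_const continuous_intros)

section \<open>Applying cancellation\<close>

text \<open>For a family W of unitaries over T for which the construction is continuous,
  cancellation in M_{2k+1}(C(T,A)) turns P + R ~ E + R into P ~ E, where
  P = col_proj W, E = corner_proj and R = tail_proj.\<close>

lemma cancellation_on_circle:
  fixes W :: "complex \<Rightarrow> nat \<Rightarrow> nat \<Rightarrow> 'a::cstar_algebra"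
  assumes cancel: "ct_cancellation_n TYPE('a) (Suc k + k)"
    and cont_P: "\<And>i j. continuous_on (sphere 0 1) (\<lambda>z. col_proj k (W z) i j)"
    and cont_V: "\<And>i j. continuous_on (sphere 0 1) (\<lambda>z. intertwiner k (W z) i j)"
    and unit: "\<And>z. munitary (Suc k) (W z)"
  obtains V where "V \<in> ctmat (Suc k + k)"
    "ctmul (Suc k + k) (ctstar V) V = on_circle (\<lambda>z. col_proj k (W z))"
    "ctmul (Suc k + k) V (ctstar V) = on_circle (\<lambda>z. corner_proj)"
proof -
  let ?N = "Suc k + k"
  define P where "P = on_circle (\<lambda>z. col_proj k (W z))"
  define E where "E = on_circle (\<lambda>z. corner_proj :: nat \<Rightarrow> nat \<Rightarrow> 'a)"
  define R where "R = on_circle (\<lambda>z. tail_proj k :: nat \<Rightarrow> nat \<Rightarrow> 'a)"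
  define X where "X = on_circle (\<lambda>z. intertwiner k (W z))"
  note orth = munitary_orthonormal[OF unit]
  have "P \<in> ctmat ?N" "E \<in> ctmat ?N" "R \<in> ctmat ?N" and X_mat: "X \<in> ctmat ?N"
    unfolding P_def E_def R_def X_def
    by (intro on_circle_ctmat continuous_on_const cont_P cont_V
              col_proj_mat corner_proj_mat tail_proj_mat intertwiner_mat)+
  then have "ctprojection ?N P" "ctprojection ?N E" "ctprojection ?N R"
    unfolding ctprojection_def P_def E_def R_def ctstar_on_circle ctmul_on_circle
      col_proj_star col_proj_idem[OF orth(1)] corner_proj_star corner_proj_idem
      tail_proj_star tail_proj_idem
    by simp_all
  moreover have "ctmul ?N P R = ctzero" "ctmul ?N E R = ctzero"
    unfolding P_def E_def R_def ctmul_on_circle col_tail_orth corner_tail_orth on_circle_zero by simp_all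
  moreover have "ctmul ?N (ctstar X) X = ctadd P R" "ctmul ?N X (ctstar X) = ctadd E R"
    unfolding P_def E_def R_def X_def ctstar_on_circle ctmul_on_circle ctadd_on_circle
      intertwiner_source[OF orth(1)] intertwiner_range[OF orth] by (rule refl)+
  then have "ctmvn ?N (ctadd P R) (ctadd E R)" using X_mat unfolding ctmvn_def by blast
  ultimately have "ctmvn ?N P E" using cancel unfolding ct_cancellation_n_def by blast
  then show ?thesis using that unfolding ctmvn_def P_def E_def by blast
qed

text \<open>The homotopy from u \<oplus> 1_k to v \<oplus> 1_k gives, via z \<mapsto> \<gamma>(arg z / 2\<pi>), a family
  over T on which the construction is continuous, since it agrees at both ends.
  Evaluating the equivalence from cancellation along t \<mapsto> exp(2\<pi>it) yields a
  closed path of partial isometries B(t) with B(t)* B(t) = \<gamma>(t) e_00 \<gamma>(t)* and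
  B(t) B(t)* = e_00.\<close>

lemma homotopy_equivalence_path:
  fixes \<gamma> :: "real \<Rightarrow> nat \<Rightarrow> nat \<Rightarrow> 'a::cstar_algebra"
  assumes cancel: "ct_cancellation_n TYPE('a) (Suc k + k)"
    and cont: "\<And>i j. continuous_on {0..1} (\<lambda>t. \<gamma> t i j)"
    and unit: "\<And>t. t \<in> {0..1} \<Longrightarrow> munitary (Suc k) (\<gamma> t)"
    and ends: "\<gamma> 0 = stab u k" "\<gamma> 1 = stab v k" "unitary_el u" "unitary_el v"
  obtains B :: "real \<Rightarrow> nat \<Rightarrow> nat \<Rightarrow> 'a" where
    "\<And>i j. continuous_on {0..1} (\<lambda>t. B t i j)"
    "\<And>t. t \<in> {0..1} \<Longrightarrow> mmul (Suc k + k) (mstar (B t)) (B t) = col_proj k (\<gamma> t)"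
    "\<And>t. t \<in> {0..1} \<Longrightarrow> mmul (Suc k + k) (B t) (mstar (B t)) = corner_proj"
    "B 1 = B 0"
proof -
  define h where "h z = Arg2pi z / (2*pi)" for z
  define e where "e t = exp (2 * of_real pi * of_real t * \<i>)" for t
  have h01: "h z \<in> {0..1}" for z
    using Arg2pi_ge_0[of z] Arg2pi_lt_2pi[of z] by (auto simp: h_def)
  have col_loop: "col_proj k (\<gamma> 0) = col_proj k (\<gamma> 1)"
    using ends by (simp add: col_proj_stab)
  have intertwiner_loop: "intertwiner k (\<gamma> 0) = intertwiner k (\<gamma> 1)"
    using ends by (simp add: intertwiner_stab)
  have "continuous_on (sphere 0 1) (\<lambda>z. col_proj k (\<gamma> (h z)) i j)" for i j
    unfolding h_def using col_loop
    by (intro loop_on_circle[of "\<lambda>t. col_proj k (\<gamma> t) i j"] continuous_on_col_proj cont) simp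
  moreover have "continuous_on (sphere 0 1) (\<lambda>z. intertwiner k (\<gamma> (h z)) i j)" for i j
    unfolding h_def using intertwiner_loop
    by (intro loop_on_circle[of "\<lambda>t. intertwiner k (\<gamma> t) i j"] continuous_on_intertwiner cont) simp
  ultimately obtain V where
    V: "V \<in> ctmat (Suc k + k)"
    and VP: "ctmul (Suc k + k) (ctstar V) V = on_circle (\<lambda>z. col_proj k (\<gamma> (h z)))"
    and VE: "ctmul (Suc k + k) V (ctstar V) = on_circle (\<lambda>z. corner_proj)"
    using cancellation_on_circle[of k "\<lambda>z. \<gamma> (h z)", OF cancel _ _ unit[OF h01]] by blast
  have e_circle: "e t \<in> sphere 0 1" for t by (simp add: e_def)
  have e_cont: "continuous_on {0..1} e" unfolding e_def by (intro continuous_intros)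
  have e_closed: "e 1 = e 0"
    unfolding e_def by (metis exp_two_pi_i exp_zero mult.commute mult.right_neutral mult_zero_right
                          of_real_0 of_real_1)
  have V_cont: "continuous_on (sphere 0 1) (\<lambda>z. V z i j)" for i j
    using V by (simp add: ctmat_def)
  have he: "col_proj k (\<gamma> (h (e t))) = col_proj k (\<gamma> t)" if "t \<in> {0..1}" for t
    using that Arg2pi_circle_param[of t] col_loop by (auto simp: h_def e_def)
  show ?thesis
  proof
    show "continuous_on {0..1} (\<lambda>t. V (e t) i j)" for i j
      by (rule continuous_on_compose2[OF V_cont e_cont]) (use e_circle in blast)
    show "mmul (Suc k + k) (mstar (V (e t))) (V (e t)) = col_proj k (\<gamma> t)" if "t \<in> {0..1}" for t
      using fun_cong[OF VP, of "e t"] e_circle he[OF that]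
      by (simp add: ctmul_def ctstar_def on_circle_def)
    show "mmul (Suc k + k) (V (e t)) (mstar (V (e t))) = corner_proj" for t
      using fun_cong[OF VE, of "e t"] e_circle by (simp add: ctmul_def ctstar_def on_circle_def)
    show "V (e 1) = V (e 0)" by (simp add: e_closed)
  qed
qed

section \<open>From partial isometries to a path of unitaries\<close>

text \<open>Let B* B = W e_00 W* and B B* = e_00.  Then B* e_00 B = (B* B)^2 = B* B, which
  says that the entries of the first row of B realise the projection W e_00 W*.\<close>

lemma equivalence_first_row:
  assumes col: "orthonormal_columns (Suc k) W"
    and src: "mmul (Suc k + k) (mstar B) B = col_proj k W"
    and rng: "mmul (Suc k + k) B (mstar B) = corner_proj"
    and j: "j < Suc k" and l: "l < Suc k"
  shows "cstar (B 0 j) * B 0 l = col_proj k W j l"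
proof -
  let ?N = "Suc k + k"
  have "mmul ?N (mmul ?N (mstar B) corner_proj) B
        = mmul ?N (mmul ?N (mstar B) B) (mmul ?N (mstar B) B)"
    by (simp add: rng[symmetric] mmul_assoc)
  also have "\<dots> = col_proj k W" by (simp only: src col_proj_idem[OF col])
  finally have "mmul ?N (mmul ?N (mstar B) corner_proj) B j l = col_proj k W j l" by simp
  moreover have "mmul ?N (mmul ?N (mstar B) corner_proj) B j l
                 = (\<Sum>i<?N. mmul ?N (mstar B) corner_proj j i * B i l)"
    using j l by (simp add: mmul_def)
  moreover have "\<dots> = (\<Sum>i<?N. if i = 0 then cstar (B 0 j) * B 0 l else 0)"
    using j by (intro sum.cong) (auto simp: corner_proj_def mmul_diag_proj_right mstar_def)
  ultimately show ?thesis by simp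
qed

text \<open>Dually B (W e_00 W*) B* = (B B*)^2 = e_00; its corner entry is 1.\<close>

lemma equivalence_corner_entry:
  assumes src: "mmul (Suc k + k) (mstar B) B = col_proj k W"
    and rng: "mmul (Suc k + k) B (mstar B) = corner_proj"
  shows "(\<Sum>j<Suc k. \<Sum>l<Suc k. B 0 j * col_proj k W j l * cstar (B 0 l)) = 1"
proof -
  let ?N = "Suc k + k"
  have "mmul ?N (mmul ?N B (col_proj k W)) (mstar B)
        = mmul ?N (mmul ?N B (mstar B)) (mmul ?N B (mstar B))"
    by (simp add: src[symmetric] mmul_assoc)
  also have "\<dots> = corner_proj" by (simp only: rng corner_proj_idem)
  finally have E: "mmul ?N (mmul ?N B (col_proj k W)) (mstar B) 0 0 = 1"
    by (simp add: corner_proj_def diag_proj_def)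
  have "mmul ?N (mmul ?N B (col_proj k W)) (mstar B) 0 0
        = (\<Sum>l<?N. (\<Sum>j<?N. B 0 j * col_proj k W j l) * cstar (B 0 l))"
    by (simp add: mmul_def mstar_def)
  also have "\<dots> = (\<Sum>l<Suc k. (\<Sum>j<Suc k. B 0 j * col_proj k W j l) * cstar (B 0 l))"
  proof (rule sum_truncate)
    show "(\<Sum>j<?N. B 0 j * col_proj k W j l) * cstar (B 0 l)
          = (\<Sum>j<Suc k. B 0 j * col_proj k W j l) * cstar (B 0 l)" if "l < Suc k" for l
      by (subst sum_truncate[where m="Suc k"]) (auto simp: col_proj_def)
    show "(\<Sum>j<?N. B 0 j * col_proj k W j l) * cstar (B 0 l) = 0" if "Suc k \<le> l" for l
      using that by (simp add: col_proj_def)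
  qed simp
  also have "\<dots> = (\<Sum>j<Suc k. \<Sum>l<Suc k. B 0 j * col_proj k W j l * cstar (B 0 l))"
    by (simp only: sum_distrib_right) (rule sum.swap)
  finally show ?thesis using E by simp
qed

lemma corner_unitary:
  assumes col: "orthonormal_columns (Suc k) W"
    and src: "mmul (Suc k + k) (mstar B) B = col_proj k W"
    and rng: "mmul (Suc k + k) B (mstar B) = corner_proj"
  shows "unitary_el (\<Sum>j<Suc k. B 0 j * W j 0)"
proof -
  have C: "(\<Sum>r<Suc k. cstar (W r 0) * W r 0) = 1" using col by (simp add: orthonormal_columns_def)
  note row = equivalence_first_row[OF col src rng]
  have "cstar (\<Sum>j<Suc k. B 0 j * W j 0) * (\<Sum>l<Suc k. B 0 l * W l 0)
        = (\<Sum>j<Suc k. \<Sum>l<Suc k. cstar (W j 0) * (cstar (B 0 j) * B 0 l) * W l 0)"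
    by (simp only: cstar_sum cstar_mult sum_product mult.assoc)
  also have "\<dots> = (\<Sum>j<Suc k. \<Sum>l<Suc k. (cstar (W j 0) * W j 0) * (cstar (W l 0) * W l 0))"
    by (intro sum.cong refl) (simp add: row col_proj_def mult.assoc)
  also have "\<dots> = 1" by (simp only: sum_product[symmetric] C mult_1_left)
  finally have left: "cstar (\<Sum>j<Suc k. B 0 j * W j 0) * (\<Sum>j<Suc k. B 0 j * W j 0) = 1" .
  have "(\<Sum>j<Suc k. B 0 j * W j 0) * cstar (\<Sum>l<Suc k. B 0 l * W l 0)
        = (\<Sum>j<Suc k. \<Sum>l<Suc k. B 0 j * (W j 0 * cstar (W l 0)) * cstar (B 0 l))"
    by (simp only: cstar_sum cstar_mult sum_product mult.assoc)
  also have "\<dots> = (\<Sum>j<Suc k. \<Sum>l<Suc k. B 0 j * col_proj k W j l * cstar (B 0 l))"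
    by (intro sum.cong refl) (simp add: col_proj_def)
  also have "\<dots> = 1" by (rule equivalence_corner_entry[OF src rng])
  finally have right: "(\<Sum>j<Suc k. B 0 j * W j 0) * cstar (\<Sum>j<Suc k. B 0 j * W j 0) = 1" .
  show ?thesis using left right by (simp add: unitary_el_def)
qed

theorem corollary4p8:
  assumes "CT_cancellation_property TYPE('a::cstar_algebra)"
  shows "K1_injective TYPE('a)"
  unfolding K1_injective_def
proof (intro allI impI)
  fix u v :: 'a
  assume "unitary_el u \<and> unitary_el v \<and> (\<exists>k. munitary_homotopic (Suc k) (stab u k) (stab v k))"
  then obtain k and \<gamma> :: "real \<Rightarrow> nat \<Rightarrow> nat \<Rightarrow> 'a" where u: "unitary_el u" and v: "unitary_el v"
    and cont: "\<And>i j. continuous_on {0..1} (\<lambda>t. \<gamma> t i j)"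
    and unit: "\<And>t. t \<in> {0..1} \<Longrightarrow> munitary (Suc k) (\<gamma> t)"
    and ends: "\<gamma> 0 = stab u k" "\<gamma> 1 = stab v k"
    unfolding munitary_homotopic_def by blast
  have "ct_cancellation_n TYPE('a) (Suc k + k)"
    using assms by (simp add: CT_cancellation_property_def)
  then obtain B where B_cont: "\<And>i j. continuous_on {0..1} (\<lambda>t. B t i j)"
    and src: "\<And>t. t \<in> {0..1} \<Longrightarrow> mmul (Suc k + k) (mstar (B t)) (B t) = col_proj k (\<gamma> t)"
    and rng: "\<And>t. t \<in> {0..1} \<Longrightarrow> mmul (Suc k + k) (B t) (mstar (B t)) = corner_proj"
    and closed: "B 1 = B 0"
    using homotopy_equivalence_path[OF _ cont unit ends u v] by blast
  define a where "a t = (\<Sum>j<Suc k. B t 0 j * \<gamma> t j 0)" for t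
  define c where "c = B 0 0 0"
  have "continuous_on {0..1} a" unfolding a_def by (intro continuous_intros B_cont cont)
  moreover have "unitary_el (a t)" if "t \<in> {0..1}" for t
    unfolding a_def using corner_unitary munitary_orthonormal(1)[OF unit] src rng that by blast
  ultimately have "cstar (a 1) * a 0 \<in> U0" by (rule unitary_path_in_U0)
  moreover have "a 0 = c * u" "a 1 = c * v"
    by (simp_all add: a_def c_def ends closed stab_col0 sum.lessThan_Suc_shift del: sum.lessThan_Suc)
  moreover have "cstar c * c = 1"
    using equivalence_first_row[OF munitary_orthonormal(1)[OF unit] src rng, of 0 0 0] u
    by (simp add: c_def ends col_proj_stab corner_proj_def diag_proj_def)
  ultimately show "cstar v * u \<in> U0" by (metis cstar_mult mult.assoc mult_1_left)
qed

end
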